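(* Let $X\in\mathbb{R}^{n\times d}$ with $X^TX$ invertible, let $y\in\{0,1\}^n$, and let $k\ge1$ be an integer. Let $g(s)=s(1-s)$, applied element-wise. For $\hat\sigma,v\in\mathbb{R}^n$ define $s^{(0)}=\hat\sigma$, $s^{(j)}=s^{(j-1)}+k^{-1}v\circ g(s^{(j-1)})$ for $j=1,\dots,k$, and $\tilde g_k(\hat\sigma,v)=k^{-1}\sum_{j=0}^{k-1}g(s^{(j)})$. Consider the iteration $$\beta_0=0,\quad \hat\sigma_0=\tfrac12\mathbf{1},\quad \Delta_t=4(X^TX)^{-1}X^T(y-\hat\sigma_t),\quad \beta_{t+1}=\beta_t+\Delta_t,\quad \hat\sigma_{t+1}=\hat\sigma_t+X\Delta_t\circ\tilde g_k(\hat\sigma_t,X\Delta_t).$$ Suppose there is $\tau<1$ such that for every $t\ge0$, $k^{-1}|X\Delta_t|\le\tau$ element-wise. Then for every $t\ge0$ every entry of $\hat\sigma_t$ lies in the open interval $(0,1)$.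
   Context: $\circ$ is the element-wise product, $|\cdot|$ of a vector is taken element-wise, and $\mathbf{1}$ is the all-ones vector. Note $\hat\sigma_{t+1}$ equals the $k$-th inner iterate $s^{(k)}$ started from $\hat\sigma_t$ with $v=X\Delta_t$, i.e. $k$ forward-Euler steps of size $k^{-1}X\Delta_t$ for the ODE $\sigma'=\sigma(1-\sigma)$. *)

theory Defs
  imports "HOL-Analysis.Analysis"
begin

definition gvec :: "real^'n \<Rightarrow> real^'n" where
  "gvec s = (\<chi> i. s$i * (1 - s$i))"

primrec s_iter :: "nat \<Rightarrow> real^'n \<Rightarrow> real^'n \<Rightarrow> nat \<Rightarrow> real^'n" where
  "s_iter k sig v 0 = sig"
| "s_iter k sig v (Suc j) =
     s_iter k sig v j + (\<chi> i. v$i * (gvec (s_iter k sig v j))$i / real k)"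

definition gtilde :: "nat \<Rightarrow> real^'n \<Rightarrow> real^'n \<Rightarrow> real^'n" where
  "gtilde k sig v = (\<chi> i. (\<Sum>j<k. (gvec (s_iter k sig v j))$i) / real k)"

definition Delta :: "real^'d^'n \<Rightarrow> real^'n \<Rightarrow> real^'n \<Rightarrow> real^'d" where
  "Delta X y sig = 4 *\<^sub>R (matrix_inv (transpose X ** X) *v (transpose X *v (y - sig)))"

primrec iter :: "nat \<Rightarrow> real^'d^'n \<Rightarrow> real^'n \<Rightarrow> nat \<Rightarrow> (real^'d) \<times> (real^'n)" where
  "iter k X y 0 = (0, (\<chi> i. 1/2))"
| "iter k X y (Suc t) =
     (let (b, sig) = iter k X y t; D = Delta X y sig; v = X *v D
      in (b + D, sig + (\<chi> i. v$i * (gtilde k sig v)$i)))"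

definition beta_seq :: "nat \<Rightarrow> real^'d^'n \<Rightarrow> real^'n \<Rightarrow> nat \<Rightarrow> real^'d" where
  "beta_seq k X y t = fst (iter k X y t)"

definition sigma_seq :: "nat \<Rightarrow> real^'d^'n \<Rightarrow> real^'n \<Rightarrow> nat \<Rightarrow> real^'n" where
  "sigma_seq k X y t = snd (iter k X y t)"

end

theory Submission
  imports Defs
begin

text \<open>
  The update of \<open>\<sigma>\<close> is exactly \<open>k\<close> forward-Euler steps \<open>s \<mapsto> s + a s (1 - s)\<close> of the
  logistic equation, with \<open>a = (X\<Delta>\<^sub>t)\<^sub>i / k\<close> and \<open>|a| < 1\<close>. Such a step keeps \<open>s\<close> in \<open>(0,1)\<close>,
  because \<open>s + a s (1 - s) = s (1 + a (1 - s))\<close> and \<open>1 - (s + a s (1 - s)) = (1 - s)(1 - a s)\<close>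
  are products of positive factors.
\<close>

lemma logistic_Euler_step_in_unit_interval:
  fixes s a :: real
  assumes "0 < s" "s < 1" "\<bar>a\<bar> < 1"
  shows "0 < s + a * (s * (1 - s))" "s + a * (s * (1 - s)) < 1"
proof -
  have "\<bar>a\<bar> * (1 - s) \<le> \<bar>a\<bar>" "\<bar>a\<bar> * s \<le> \<bar>a\<bar>"
    using assms by (simp_all add: mult_left_le)
  then have "\<bar>a * (1 - s)\<bar> < 1" "\<bar>a * s\<bar> < 1"
    using assms by (simp_all add: abs_mult)
  then have "0 < s * (1 + a * (1 - s))" "0 < (1 - s) * (1 - a * s)"
    using assms by simp_all
  then show "0 < s + a * (s * (1 - s))" "s + a * (s * (1 - s)) < 1"
    by (simp_all add: algebra_simps)
qed

lemma s_iter_in_unit_cube: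
  assumes "\<forall>i. 0 < sig$i \<and> sig$i < 1" and "\<forall>i. \<bar>v$i\<bar> / real k < 1"
  shows "0 < s_iter k sig v j $ i \<and> s_iter k sig v j $ i < 1"
proof (induction j arbitrary: i)
  case 0
  then show ?case using assms(1) by simp
next
  case (Suc j)
  let ?s = "s_iter k sig v j $ i"
  have "\<bar>v$i / real k\<bar> < 1" using assms(2) by simp
  with Suc.IH have "0 < ?s + v$i / real k * (?s * (1 - ?s))" "?s + v$i / real k * (?s * (1 - ?s)) < 1"
    using logistic_Euler_step_in_unit_interval by blast+
  then show ?case by (simp add: gvec_def)
qed

lemma s_iter_eq_sum:
  "s_iter k sig v j $ i = sig$i + v$i * (\<Sum>l<j. gvec (s_iter k sig v l) $ i) / real k"
  by (induction j) (simp_all add: algebra_simps add_divide_distrib)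

lemma sigma_seq_0: "sigma_seq k X y 0 = (\<chi> i. 1/2)"
  by (simp add: sigma_seq_def)

lemma sigma_seq_Suc:
  "sigma_seq k X y (Suc t) =
     s_iter k (sigma_seq k X y t) (X *v Delta X y (sigma_seq k X y t)) k"
proof -
  obtain b sig where "iter k X y t = (b, sig)" by fastforce
  then show ?thesis
    by (simp add: sigma_seq_def Let_def vec_eq_iff s_iter_eq_sum gtilde_def)
qed

theorem lemma5:
  fixes X :: "real^'d^'n" and y :: "real^'n" and k :: nat
  assumes "invertible (transpose X ** X)"
    and "\<forall>i. y$i \<in> {0, 1}"
    and "k \<ge> 1"
    and "\<exists>\<tau> < 1. \<forall>t i. \<bar>(X *v Delta X y (sigma_seq k X y t))$i\<bar> / real k \<le> \<tau>"
  shows "\<forall>t i. 0 < sigma_seq k X y t $ i \<and> sigma_seq k X y t $ i < 1"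
proof (intro allI)
  fix t i
  from assms(4) have step_bound: "\<bar>(X *v Delta X y (sigma_seq k X y t))$i\<bar> / real k < 1" for t i
    by (meson le_less_trans)
  show "0 < sigma_seq k X y t $ i \<and> sigma_seq k X y t $ i < 1"
  proof (induction t arbitrary: i)
    case 0
    then show ?case by (simp add: sigma_seq_0)
  next
    case (Suc t)
    then show ?case
      unfolding sigma_seq_Suc using s_iter_in_unit_cube step_bound by blast
  qed
qed

end
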